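(* Let $c\ge 0$, $b>0$, $q(x)=c/x^2$, and consider the eigenvalue problem $$-u''+q(x)u=\lambda u,\quad x\in(0,b),\qquad u(0)=u(b)=0 .$$ Let $\lambda_j$ be its eigenvalues and $u_j$ corresponding eigenfunctions normalized by $\int_0^b u_j^2\,dx=1$, and set $J_j(b)=u_j'(b)^2/\lambda_j$. Then $$J_j(b)=\frac{2}{b},\qquad j=1,2,\dots .$$ *)

theory Defs
  imports "HOL-Analysis.Analysis"
begin

end

theory Submission
  imports Defs
begin

(* With v = u' and p(x) = c/x^2 - lam the equation reads u'' = p u, and the function
   F(x) = x v^2 - (c/x - lam x) u^2 - u v satisfies F' = 2 lam u^2.  Hence F has limits at
   both ends, differing by 2 lam (integral of u^2) = 2 lam.  At b, where u vanishes, the limit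
   is b u'(b)^2.  At 0 it is 0: for c = 0 the solution is C^1 up to 0; for c > 0 the product
   G = u v is nondecreasing near 0 with G' = v^2 + p u^2 and u^2 <= 2 x G, so G >= 0, and a
   nonzero limit of G or of F + G = x (v^2 - p u^2) would give G' >= a/x for some a > 0,
   driving G logarithmically to -infinity.  Finally lam > 0, because for lam <= 0 the same
   monotonicity of G on all of (0, b) forces u = 0. *)

lemma DERIV_ge_inverse_imp_neg:
  fixes G G' :: "real \<Rightarrow> real"
  assumes "0 < \<delta>" "0 < a"
    and G_deriv: "\<And>x. 0 < x \<Longrightarrow> x < \<delta> \<Longrightarrow> (G has_real_derivative G' x) (at x)"
    and G'_lower: "\<And>x. 0 < x \<Longrightarrow> x < \<delta> \<Longrightarrow> a / x \<le> G' x"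
  obtains x where "0 < x" "x < \<delta>" "G x < 0"
proof -
  define s where "s = \<delta> / 2"
  define t where "t = s * exp (- (\<bar>G s\<bar> + 1) / a)"
  have s: "0 < s" "s < \<delta>" using assms by (auto simp: s_def)
  have "- (\<bar>G s\<bar> + 1) / a < 0" using \<open>0 < a\<close> by (intro divide_neg_pos) auto
  then have "exp (- (\<bar>G s\<bar> + 1) / a) < 1" by simp
  then have t: "0 < t" "t < s" using s by (auto simp: t_def)
  have "G t - a * ln t \<le> G s - a * ln s"
  proof (rule DERIV_nonneg_imp_nondecreasing[of t s "\<lambda>x. G x - a * ln x"])
    fix x assume "t \<le> x" "x \<le> s"
    then have x: "0 < x" "x < \<delta>" using t s by auto
    show "\<exists>y. ((\<lambda>x. G x - a * ln x) has_real_derivative y) (at x) \<and> 0 \<le> y"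
      using G'_lower[OF x] x
      by (intro exI[of _ "G' x - a * (1 / x)"]) (auto intro!: derivative_eq_intros G_deriv)
  qed (use t in simp)
  then have "G t \<le> G s + a * (ln t - ln s)" by (simp add: algebra_simps)
  also have "a * (ln t - ln s) = - (\<bar>G s\<bar> + 1)" using s \<open>0 < a\<close> by (simp add: t_def ln_mult)
  finally have "G t < 0" by linarith
  with t s show ?thesis by (intro that) auto
qed

lemma mean_value_real:
  fixes f f' :: "real \<Rightarrow> real"
  assumes "a < b" "continuous_on {a..b} f"
    and "\<And>x. a < x \<Longrightarrow> x < b \<Longrightarrow> (f has_real_derivative f' x) (at x)"
  obtains z where "a < z" "z < b" "f b - f a = (b - a) * f' z"
proof -
  obtain z where "a < z" "z < b" "f b - f a = f' z * (b - a)"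
    using mvt[of a b f "\<lambda>z. (*) (f' z)"] assms by (auto simp: has_field_derivative_def)
  then show ?thesis by (intro that) (auto simp: mult.commute)
qed

lemma antiderivative_tendsto_at_ends:
  fixes F f :: "real \<Rightarrow> real"
  assumes "a < b" and f_cont: "continuous_on {a..b} f"
    and F_deriv: "\<And>x. a < x \<Longrightarrow> x < b \<Longrightarrow> (F has_real_derivative f x) (at x)"
  obtains C where "(F \<longlongrightarrow> C) (at_right a)" "(F \<longlongrightarrow> C + integral {a..b} f) (at_left b)"
proof -
  define I where "I = (\<lambda>x. integral {a..x} f)"
  have I_cont: "continuous_on {a..b} I"
    unfolding I_def by (intro indefinite_integral_continuous_1 integrable_continuous_interval f_cont)
  have I_deriv: "(I has_real_derivative f x) (at x)" if "a < x" "x < b" for x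
  proof -
    have "(I has_real_derivative f x) (at x within {a..b})"
      unfolding I_def using that by (intro integral_has_real_derivative f_cont) auto
    then show ?thesis using that by (simp add: at_within_Icc_at)
  qed
  have "((\<lambda>x. F x - I x) has_field_derivative 0) (at x within {a<..<b})"
    if "x \<in> {a<..<b}" for x
  proof -
    have "((\<lambda>x. F x - I x) has_real_derivative f x - f x) (at x)"
      using that by (intro DERIV_diff F_deriv I_deriv) auto
    then have "((\<lambda>x. F x - I x) has_real_derivative 0) (at x)" by simp
    then show ?thesis by (rule has_field_derivative_at_within)
  qed
  then obtain C where "\<And>x. x \<in> {a<..<b} \<Longrightarrow> F x - I x = C"
    using has_field_derivative_zero_constant[of "{a<..<b}" "\<lambda>x. F x - I x"] by auto
  then have C: "\<And>x. x \<in> {a<..<b} \<Longrightarrow> C + I x = F x" by (simp add: algebra_simps)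
  have "((\<lambda>x. C + I x) \<longlongrightarrow> C + I a) (at_right a)"
    by (intro tendsto_add tendsto_const continuous_on_Icc_at_rightD[OF I_cont \<open>a < b\<close>])
  moreover have "\<forall>\<^sub>F x in at_right a. C + I x = F x"
    unfolding eventually_at_right_field using \<open>a < b\<close> C by (intro exI[of _ b]) auto
  ultimately have lim_a: "(F \<longlongrightarrow> C + I a) (at_right a)" by (rule Lim_transform_eventually)
  have "((\<lambda>x. C + I x) \<longlongrightarrow> C + I b) (at_left b)"
    by (intro tendsto_add tendsto_const continuous_on_Icc_at_leftD[OF I_cont \<open>a < b\<close>])
  moreover have "\<forall>\<^sub>F x in at_left b. C + I x = F x"
    unfolding eventually_at_left_field using \<open>a < b\<close> C by (intro exI[of _ a]) auto
  ultimately have "(F \<longlongrightarrow> C + I b) (at_left b)" by (rule Lim_transform_eventually)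
  with lim_a show ?thesis by (intro that) (simp_all add: I_def)
qed

locale linear_ode_solution =
  fixes p u v :: "real \<Rightarrow> real" and b :: real
  assumes b_pos: "0 < b"
    and u_deriv: "\<And>x. 0 < x \<Longrightarrow> x < b \<Longrightarrow> (u has_real_derivative v x) (at x)"
    and v_deriv: "\<And>x. 0 < x \<Longrightarrow> x < b \<Longrightarrow> (v has_real_derivative p x * u x) (at x)"
    and u_cont: "continuous_on {0..b} u"
begin

lemma v_lipschitz:
  assumes "0 \<le> \<alpha>" "\<beta> \<le> b" "continuous_on {\<alpha>..\<beta>} p"
  obtains K where "0 \<le> K"
    "\<And>x y. x \<in> {\<alpha><..<\<beta>} \<Longrightarrow> y \<in> {\<alpha><..<\<beta>} \<Longrightarrow> \<bar>v x - v y\<bar> \<le> K * \<bar>x - y\<bar>"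
proof -
  have "continuous_on {\<alpha>..\<beta>} (\<lambda>x. p x * u x)"
    using assms by (intro continuous_intros continuous_on_subset[OF u_cont]) auto
  then obtain K where "0 \<le> K" and K: "\<And>x. x \<in> {\<alpha>..\<beta>} \<Longrightarrow> norm (p x * u x) \<le> K"
    by (rule continuous_on_compact_bound[OF compact_Icc]) auto
  have "norm (v x - v y) \<le> K * norm (x - y)" if "x \<in> {\<alpha><..<\<beta>}" "y \<in> {\<alpha><..<\<beta>}" for x y
  proof (rule field_differentiable_bound[where S = "{\<alpha><..<\<beta>}" and f' = "\<lambda>x. p x * u x"])
    fix z assume z: "z \<in> {\<alpha><..<\<beta>}"
    then have "(v has_field_derivative p z * u z) (at z)" using assms by (intro v_deriv) auto
    then show "(v has_field_derivative p z * u z) (at z within {\<alpha><..<\<beta>})"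
      by (rule has_field_derivative_at_within)
    show "norm (p z * u z) \<le> K" using z K by auto
  qed (use that in auto)
  with \<open>0 \<le> K\<close> show ?thesis by (intro that) auto
qed

lemma v_tendsto_left_derivative:
  assumes "0 \<le> a" "a < b" "continuous_on {a..b} p"
    and "(u has_real_derivative d) (at_left b)"
  shows "(v \<longlongrightarrow> d) (at_left b)"
proof -
  obtain K where "0 \<le> K"
    and K: "\<And>x y. x \<in> {a<..<b} \<Longrightarrow> y \<in> {a<..<b} \<Longrightarrow> \<bar>v x - v y\<bar> \<le> K * \<bar>x - y\<bar>"
    using v_lipschitz assms by blast
  have slope: "((\<lambda>s. (u s - u b) / (s - b)) \<longlongrightarrow> d) (at_left b)"
    using assms(4) by (simp add: has_field_derivative_iff)
  have "\<forall>\<^sub>F s in at_left b. norm (v s - (u s - u b) / (s - b)) \<le> K * (b - s)"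
    unfolding eventually_at_left_field
  proof (intro exI[of _ a] conjI allI impI)
    fix s assume s: "a < s" "s < b"
    have "continuous_on {s..b} u" using s assms by (intro continuous_on_subset[OF u_cont]) auto
    then obtain z where z: "s < z" "z < b" "u b - u s = (b - s) * v z"
      using mean_value_real[of s b u v] s assms u_deriv by auto
    then have "(u s - u b) / (s - b) = v z" using s by (auto simp: field_simps)
    moreover have "\<bar>v s - v z\<bar> \<le> K * (b - s)"
      using K[of s z] mult_left_mono[of "z - s" "b - s" K] s z \<open>0 \<le> K\<close> by auto
    ultimately show "norm (v s - (u s - u b) / (s - b)) \<le> K * (b - s)" by simp
  qed (fact \<open>a < b\<close>)
  then have "((\<lambda>s. v s - (u s - u b) / (s - b)) \<longlongrightarrow> 0) (at_left b)"
    by (rule Lim_null_comparison) (auto intro!: tendsto_eq_intros)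
  from tendsto_add[OF this slope] show ?thesis by simp
qed

lemma uv_deriv:
  assumes "0 < x" "x < b"
  shows "((\<lambda>x. u x * v x) has_real_derivative (v x)\<^sup>2 + p x * (u x)\<^sup>2) (at x)"
  using assms
  by (auto intro!: derivative_eq_intros u_deriv v_deriv simp: power2_eq_square algebra_simps)

lemma sq_eq_uv:
  assumes "u 0 = 0" "0 < x" "x \<le> b"
  obtains z where "0 < z" "z < x" "(u x)\<^sup>2 = 2 * x * (u z * v z)"
proof -
  have "continuous_on {0..x} (\<lambda>y. (u y)\<^sup>2)"
    using assms by (intro continuous_intros continuous_on_subset[OF u_cont]) auto
  moreover have "((\<lambda>y. (u y)\<^sup>2) has_real_derivative 2 * (u y * v y)) (at y)"
    if "0 < y" "y < x" for y
    using that assms by (auto intro!: derivative_eq_intros u_deriv)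
  ultimately obtain z where "0 < z" "z < x" "(u x)\<^sup>2 - (u 0)\<^sup>2 = (x - 0) * (2 * (u z * v z))"
    using mean_value_real[of 0 x "\<lambda>y. (u y)\<^sup>2" "\<lambda>y. 2 * (u y * v y)"] assms by blast
  with assms show ?thesis by (intro that) (auto simp: algebra_simps)
qed

lemma uv_mono:
  assumes "\<delta> \<le> b" and p_nonneg: "\<And>x. 0 < x \<Longrightarrow> x < \<delta> \<Longrightarrow> 0 \<le> p x"
    and "0 < s" "s \<le> t" "t < \<delta>"
  shows "u s * v s \<le> u t * v t"
proof (rule DERIV_nonneg_imp_nondecreasing[OF \<open>s \<le> t\<close>])
  fix x assume "s \<le> x" "x \<le> t"
  then have x: "0 < x" "x < \<delta>" "x < b" using assms by auto
  then show "\<exists>y. ((\<lambda>x. u x * v x) has_real_derivative y) (at x) \<and> 0 \<le> y"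
    using p_nonneg[OF x(1,2)]
    by (intro exI[of _ "(v x)\<^sup>2 + p x * (u x)\<^sup>2"] conjI uv_deriv) auto
qed

lemma sq_le_uv:
  assumes "u 0 = 0" "\<delta> \<le> b" "\<And>x. 0 < x \<Longrightarrow> x < \<delta> \<Longrightarrow> 0 \<le> p x"
    and "0 < x" "x < \<delta>"
  shows "(u x)\<^sup>2 \<le> 2 * x * (u x * v x)"
proof -
  obtain z where z: "0 < z" "z < x" "(u x)\<^sup>2 = 2 * x * (u z * v z)"
    using sq_eq_uv[of x] assms by auto
  have "u z * v z \<le> u x * v x" using z assms by (intro uv_mono[of \<delta>]) auto
  with z \<open>0 < x\<close> show ?thesis by simp
qed

lemma uv_nonneg:
  assumes "u 0 = 0" "\<delta> \<le> b" "\<And>x. 0 < x \<Longrightarrow> x < \<delta> \<Longrightarrow> 0 \<le> p x"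
    and "0 < x" "x < \<delta>"
  shows "0 \<le> u x * v x"
proof -
  have "0 \<le> 2 * x * (u x * v x)"
    using sq_le_uv[OF assms] zero_le_power2[of "u x"] by linarith
  with \<open>0 < x\<close> show ?thesis by (simp add: zero_le_mult_iff)
qed

lemma vanishes_if_potential_nonneg:
  assumes "u 0 = 0" "\<And>x. 0 < x \<Longrightarrow> x < b \<Longrightarrow> 0 \<le> p x"
    and uv_b: "((\<lambda>x. u x * v x) \<longlongrightarrow> 0) (at_left b)"
    and "0 < x" "x < b"
  shows "u x = 0"
proof -
  have "u x * v x \<le> 0"
  proof (rule tendsto_le[OF trivial_limit_at_left_real uv_b tendsto_const])
    show "\<forall>\<^sub>F y in at_left b. u x * v x \<le> u y * v y"
      unfolding eventually_at_left_field using assms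
      by (intro exI[of _ x]) (auto intro: uv_mono[of b])
  qed
  have "(u x)\<^sup>2 \<le> 2 * x * (u x * v x)"
    using assms by (intro sq_le_uv[of b]) auto
  also have "\<dots> \<le> 0"
    using \<open>0 < x\<close> \<open>u x * v x \<le> 0\<close> by (simp add: mult_nonneg_nonpos)
  finally show ?thesis by simp
qed

lemma boundary_form_limit_eq_0:
  assumes "u 0 = 0" "0 < \<delta>" "\<delta> \<le> b"
    and p_nonneg: "\<And>x. 0 < x \<Longrightarrow> x < \<delta> \<Longrightarrow> 0 \<le> p x"
    and lim: "((\<lambda>x. x * ((v x)\<^sup>2 - p x * (u x)\<^sup>2)) \<longlongrightarrow> C) (at_right 0)"
  shows "C = 0"
proof (rule ccontr)
  assume "C \<noteq> 0"
  then have "\<bar>C\<bar> / 2 < \<bar>C\<bar>" by simp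
  with tendsto_rabs[OF lim]
  have "\<forall>\<^sub>F x in at_right 0. \<bar>C\<bar> / 2 < \<bar>x * ((v x)\<^sup>2 - p x * (u x)\<^sup>2)\<bar>"
    by (rule order_tendstoD)
  then obtain \<epsilon> where "0 < \<epsilon>"
    and large: "\<And>x. 0 < x \<Longrightarrow> x < \<epsilon> \<Longrightarrow> \<bar>C\<bar> / 2 < \<bar>x * ((v x)\<^sup>2 - p x * (u x)\<^sup>2)\<bar>"
    unfolding eventually_at_right_field by auto
  obtain x where x: "0 < x" "x < min \<epsilon> \<delta>" "u x * v x < 0"
  proof (rule DERIV_ge_inverse_imp_neg[of "min \<epsilon> \<delta>" "\<bar>C\<bar> / 2" _ "\<lambda>x. (v x)\<^sup>2 + p x * (u x)\<^sup>2"])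
    show "0 < min \<epsilon> \<delta>" "0 < \<bar>C\<bar> / 2" using \<open>0 < \<epsilon>\<close> \<open>0 < \<delta>\<close> \<open>C \<noteq> 0\<close> by auto
    fix x assume x: "0 < x" "x < min \<epsilon> \<delta>"
    show "((\<lambda>x. u x * v x) has_real_derivative (v x)\<^sup>2 + p x * (u x)\<^sup>2) (at x)"
      using x assms by (intro uv_deriv) auto
    have "\<bar>C\<bar> / 2 < x * \<bar>(v x)\<^sup>2 - p x * (u x)\<^sup>2\<bar>"
      using large[of x] x by (simp add: abs_mult)
    also have "\<dots> \<le> x * ((v x)\<^sup>2 + p x * (u x)\<^sup>2)"
      using x p_nonneg[of x] by (intro mult_left_mono) (auto simp: abs_le_iff)
    finally show "\<bar>C\<bar> / 2 / x \<le> (v x)\<^sup>2 + p x * (u x)\<^sup>2"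
      using x by (simp add: divide_le_eq mult.commute)
  qed (rule that)
  moreover have "0 \<le> u x * v x" using x assms by (intro uv_nonneg[of \<delta>]) auto
  ultimately show False by simp
qed

lemma uv_takes_small_values:
  assumes "u 0 = 0" "0 < \<delta>" "\<delta> \<le> b" "0 < a" "0 < e"
    and p_lower: "\<And>x. 0 < x \<Longrightarrow> x < \<delta> \<Longrightarrow> a / x\<^sup>2 \<le> p x"
  shows "\<exists>t\<in>{0<..<\<delta>}. u t * v t < e"
proof (rule ccontr)
  assume "\<not> ?thesis"
  then have large: "e \<le> u x * v x" if "0 < x" "x < \<delta>" for x
    using that by (metis greaterThanLessThan_iff not_less)
  have p_nonneg: "0 \<le> p x" if "0 < x" "x < \<delta>" for x
    using \<open>0 < a\<close> by (intro order_trans[OF _ p_lower[OF that]]) simp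
  obtain x where x: "0 < x" "x < \<delta>" "u x * v x < 0"
  proof (rule DERIV_ge_inverse_imp_neg[of \<delta> "2 * a * e" _ "\<lambda>x. (v x)\<^sup>2 + p x * (u x)\<^sup>2"])
    show "0 < \<delta>" "0 < 2 * a * e" using assms by auto
    fix x assume x: "0 < x" "x < \<delta>"
    show "((\<lambda>x. u x * v x) has_real_derivative (v x)\<^sup>2 + p x * (u x)\<^sup>2) (at x)"
      using x assms by (intro uv_deriv) auto
    obtain z where z: "0 < z" "z < x" "(u x)\<^sup>2 = 2 * x * (u z * v z)"
      using sq_eq_uv[of x] x assms by auto
    have "2 * x * e \<le> (u x)\<^sup>2" using z large[of z] x by simp
    then have "a / x\<^sup>2 * (2 * x * e) \<le> p x * (u x)\<^sup>2"
      using p_lower[OF x] p_nonneg[OF x] x assms by (intro mult_mono) auto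
    moreover have "a / x\<^sup>2 * (2 * x * e) = 2 * a * e / x"
      using x by (simp add: power2_eq_square)
    ultimately show "2 * a * e / x \<le> (v x)\<^sup>2 + p x * (u x)\<^sup>2"
      using zero_le_power2[of "v x"] by linarith
  qed (rule that)
  moreover have "0 \<le> u x * v x" using x assms p_nonneg by (intro uv_nonneg[of \<delta>]) auto
  ultimately show False by simp
qed

lemma uv_tendsto_0_at_singular_endpoint:
  assumes "u 0 = 0" "0 < \<delta>" "\<delta> \<le> b" "0 < a"
    and p_lower: "\<And>x. 0 < x \<Longrightarrow> x < \<delta> \<Longrightarrow> a / x\<^sup>2 \<le> p x"
  shows "((\<lambda>x. u x * v x) \<longlongrightarrow> 0) (at_right 0)"
proof (rule order_tendstoI)
  have p_nonneg: "0 \<le> p x" if "0 < x" "x < \<delta>" for x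
    using \<open>0 < a\<close> by (intro order_trans[OF _ p_lower[OF that]]) simp
  fix e :: real
  show "\<forall>\<^sub>F x in at_right 0. e < u x * v x" if "e < 0"
    unfolding eventually_at_right_field using assms p_nonneg that
    by (intro exI[of _ \<delta>]) (auto dest: uv_nonneg[of \<delta>] intro: less_le_trans)
  show "\<forall>\<^sub>F x in at_right 0. u x * v x < e" if "0 < e"
  proof -
    obtain t where t: "0 < t" "t < \<delta>" "u t * v t < e"
      using uv_takes_small_values[OF assms(1-4) \<open>0 < e\<close> p_lower] by auto
    then show ?thesis
      unfolding eventually_at_right_field using assms p_nonneg
      by (intro exI[of _ t]) (auto dest: uv_mono[of \<delta> _ t] intro: le_less_trans)
  qed
qed

lemma tendsto_0_at_regular_endpoint:
  assumes "u 0 = 0" "0 < \<delta>" "\<delta> \<le> b" "continuous_on {0..\<delta>} p"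
  shows "((\<lambda>x. u x * v x) \<longlongrightarrow> 0) (at_right 0)"
    and "((\<lambda>x. x * ((v x)\<^sup>2 - p x * (u x)\<^sup>2)) \<longlongrightarrow> 0) (at_right 0)"
proof -
  obtain K where "0 \<le> K"
    and K: "\<And>x y. x \<in> {0<..<\<delta>} \<Longrightarrow> y \<in> {0<..<\<delta>} \<Longrightarrow> \<bar>v x - v y\<bar> \<le> K * \<bar>x - y\<bar>"
    using v_lipschitz assms by blast
  define B where "B = \<bar>v (\<delta> / 2)\<bar> + K * \<delta>"
  have v_bound: "\<bar>v x\<bar> \<le> B" if "0 < x" "x < \<delta>" for x
  proof -
    have "\<bar>x - \<delta> / 2\<bar> \<le> \<delta>" using that by (simp add: abs_le_iff)
    then have "K * \<bar>x - \<delta> / 2\<bar> \<le> K * \<delta>" using \<open>0 \<le> K\<close> by (rule mult_left_mono)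
    with K[of x "\<delta> / 2"] that have "\<bar>v x - v (\<delta> / 2)\<bar> \<le> K * \<delta>" by auto
    then show ?thesis unfolding B_def by linarith
  qed
  have near_0: "\<forall>\<^sub>F x in at_right 0. 0 < x \<and> x < \<delta>"
    unfolding eventually_at_right_field using \<open>0 < \<delta>\<close> by blast
  have u_0: "(u \<longlongrightarrow> 0) (at_right 0)"
    using continuous_on_Icc_at_rightD[OF u_cont b_pos] assms(1) by simp
  have p_0: "(p \<longlongrightarrow> p 0) (at_right 0)"
    using continuous_on_Icc_at_rightD[OF assms(4) assms(2)] .
  show "((\<lambda>x. u x * v x) \<longlongrightarrow> 0) (at_right 0)"
  proof (rule Lim_null_comparison)
    show "\<forall>\<^sub>F x in at_right 0. norm (u x * v x) \<le> \<bar>u x\<bar> * B"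
      using near_0 by eventually_elim (auto simp: abs_mult intro: mult_left_mono v_bound)
    show "((\<lambda>x. \<bar>u x\<bar> * B) \<longlongrightarrow> 0) (at_right 0)"
      using tendsto_mult_right[OF tendsto_rabs[OF u_0], of B] by simp
  qed
  have "((\<lambda>x. x * (v x)\<^sup>2) \<longlongrightarrow> 0) (at_right 0)"
  proof (rule Lim_null_comparison)
    show "\<forall>\<^sub>F x in at_right 0. norm (x * (v x)\<^sup>2) \<le> x * B\<^sup>2"
      using near_0
    proof eventually_elim
      case (elim x)
      then have "(v x)\<^sup>2 \<le> B\<^sup>2" using v_bound[of x] by (simp add: abs_le_square_iff[symmetric])
      with elim show ?case by (simp add: abs_mult mult_left_mono)
    qed
    show "((\<lambda>x. x * B\<^sup>2) \<longlongrightarrow> 0) (at_right 0)"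
      by (auto intro!: tendsto_eq_intros)
  qed
  moreover have "((\<lambda>x. x * p x * (u x)\<^sup>2) \<longlongrightarrow> 0 * p 0 * 0\<^sup>2) (at_right 0)"
    by (intro tendsto_intros p_0 u_0)
  ultimately have "((\<lambda>x. x * (v x)\<^sup>2 - x * p x * (u x)\<^sup>2) \<longlongrightarrow> 0 - 0 * p 0 * 0\<^sup>2) (at_right 0)"
    by (rule tendsto_diff)
  then show "((\<lambda>x. x * ((v x)\<^sup>2 - p x * (u x)\<^sup>2)) \<longlongrightarrow> 0) (at_right 0)"
    by (simp add: algebra_simps)
qed

end

locale inverse_square_dirichlet = linear_ode_solution "\<lambda>x. c / x\<^sup>2 - lam" u v b
  for c lam :: real and u v :: "real \<Rightarrow> real" and b :: real +
  fixes d :: real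
  assumes c_nonneg: "0 \<le> c" and u_0: "u 0 = 0" and u_b: "u b = 0"
    and u_left_deriv: "(u has_real_derivative d) (at_left b)"
begin

definition rellich_form :: "real \<Rightarrow> real" where
  "rellich_form x = x * (v x)\<^sup>2 - (c / x - lam * x) * (u x)\<^sup>2 - u x * v x"

lemma rellich_form_deriv:
  assumes "0 < x" "x < b"
  shows "(rellich_form has_real_derivative 2 * lam * (u x)\<^sup>2) (at x)"
  unfolding rellich_form_def[abs_def] using assms
  by (auto intro!: derivative_eq_intros u_deriv v_deriv simp: power2_eq_square field_simps)

lemma rellich_form_eq:
  assumes "0 < x"
  shows "rellich_form x = x * ((v x)\<^sup>2 - (c / x\<^sup>2 - lam) * (u x)\<^sup>2) - u x * v x"
  using assms by (simp add: rellich_form_def power2_eq_square field_simps)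

lemma v_tendsto_at_b: "(v \<longlongrightarrow> d) (at_left b)"
  using b_pos u_left_deriv
  by (intro v_tendsto_left_derivative[of "b / 2"] continuous_intros) auto

lemma u_tendsto_at_b: "(u \<longlongrightarrow> 0) (at_left b)"
  using continuous_on_Icc_at_leftD[OF u_cont b_pos] u_b by simp

lemma rellich_form_tendsto_at_b: "(rellich_form \<longlongrightarrow> b * d\<^sup>2) (at_left b)"
proof -
  have "(rellich_form \<longlongrightarrow> b * d\<^sup>2 - (c / b - lam * b) * 0\<^sup>2 - 0 * d) (at_left b)"
    unfolding rellich_form_def[abs_def] using b_pos
    by (intro tendsto_intros u_tendsto_at_b v_tendsto_at_b) auto
  then show ?thesis by simp
qed

lemma potential_ge_half_near_0:
  assumes "0 < c"
  obtains \<delta> where "0 < \<delta>" "\<delta> \<le> b" "\<And>x. 0 < x \<Longrightarrow> x < \<delta> \<Longrightarrow> (c / 2) / x\<^sup>2 \<le> c / x\<^sup>2 - lam"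
proof
  define \<delta> where "\<delta> = min b (sqrt (c / (2 * (\<bar>lam\<bar> + 1))))"
  show "0 < \<delta>" "\<delta> \<le> b" using b_pos assms by (auto simp: \<delta>_def)
  fix x assume x: "0 < x" "x < \<delta>"
  then have "x < sqrt (c / (2 * (\<bar>lam\<bar> + 1)))" by (simp add: \<delta>_def)
  then have "x\<^sup>2 < (sqrt (c / (2 * (\<bar>lam\<bar> + 1))))\<^sup>2"
    using x by (intro power_strict_mono) auto
  then have "x\<^sup>2 < c / (2 * (\<bar>lam\<bar> + 1))" using assms by simp
  then have "2 * (\<bar>lam\<bar> + 1) * x\<^sup>2 < c"
    by (simp add: less_divide_eq mult.commute)
  moreover have "lam * x\<^sup>2 \<le> \<bar>lam\<bar> * x\<^sup>2" by (rule mult_right_mono) auto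
  moreover have "2 * (\<bar>lam\<bar> + 1) * x\<^sup>2 = 2 * (\<bar>lam\<bar> * x\<^sup>2) + 2 * x\<^sup>2"
    by (simp add: algebra_simps)
  ultimately have "2 * (lam * x\<^sup>2) \<le> c" using zero_le_power2[of x] by linarith
  then have "lam \<le> (c / 2) / x\<^sup>2" using x by (simp add: field_simps)
  moreover have "c / x\<^sup>2 = (c / 2) / x\<^sup>2 + (c / 2) / x\<^sup>2" by (simp add: field_simps)
  ultimately show "(c / 2) / x\<^sup>2 \<le> c / x\<^sup>2 - lam" by linarith
qed

lemma uv_tendsto_0_at_0: "((\<lambda>x. u x * v x) \<longlongrightarrow> 0) (at_right 0)"
proof (cases "c = 0")
  case True
  then have "continuous_on {0..b} (\<lambda>x. c / x\<^sup>2 - lam)" by simp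
  then show ?thesis by (rule tendsto_0_at_regular_endpoint(1)[OF u_0 b_pos order_refl])
next
  case False
  with c_nonneg have "0 < c" by simp
  then obtain \<delta> where "0 < \<delta>" "\<delta> \<le> b"
    and "\<And>x. 0 < x \<Longrightarrow> x < \<delta> \<Longrightarrow> (c / 2) / x\<^sup>2 \<le> c / x\<^sup>2 - lam"
    using potential_ge_half_near_0 by blast
  moreover have "0 < c / 2" using \<open>0 < c\<close> by simp
  ultimately show ?thesis by (intro uv_tendsto_0_at_singular_endpoint[OF u_0])
qed

lemma rellich_form_limit_at_0:
  assumes lim: "(rellich_form \<longlongrightarrow> C) (at_right 0)"
  shows "C = 0"
proof -
  define h where "h x = x * ((v x)\<^sup>2 - (c / x\<^sup>2 - lam) * (u x)\<^sup>2)" for x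
  have "((\<lambda>x. rellich_form x + u x * v x) \<longlongrightarrow> C + 0) (at_right 0)"
    by (intro tendsto_add lim uv_tendsto_0_at_0)
  moreover have "\<forall>\<^sub>F x in at_right 0. rellich_form x + u x * v x = h x"
    using eventually_at_right_less[of 0] by eventually_elim (simp add: rellich_form_eq h_def)
  ultimately have "(h \<longlongrightarrow> C + 0) (at_right 0)" by (rule Lim_transform_eventually)
  then have h_lim: "(h \<longlongrightarrow> C) (at_right 0)" by simp
  show ?thesis
  proof (cases "c = 0")
    case True
    then have "continuous_on {0..b} (\<lambda>x. c / x\<^sup>2 - lam)" by simp
    then have "(h \<longlongrightarrow> 0) (at_right 0)"
      unfolding h_def by (rule tendsto_0_at_regular_endpoint(2)[OF u_0 b_pos order_refl])
    with h_lim show ?thesis by (rule tendsto_unique[OF trivial_limit_at_right_real])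
  next
    case False
    with c_nonneg have "0 < c" by simp
    then obtain \<delta> where "0 < \<delta>" "\<delta> \<le> b"
      and p_lower: "\<And>x. 0 < x \<Longrightarrow> x < \<delta> \<Longrightarrow> (c / 2) / x\<^sup>2 \<le> c / x\<^sup>2 - lam"
      using potential_ge_half_near_0 by blast
    have "0 \<le> c / x\<^sup>2 - lam" if "0 < x" "x < \<delta>" for x
      using \<open>0 < c\<close> by (intro order_trans[OF _ p_lower[OF that]]) simp
    with \<open>0 < \<delta>\<close> \<open>\<delta> \<le> b\<close> h_lim show ?thesis
      unfolding h_def by (intro boundary_form_limit_eq_0[OF u_0])
  qed
qed

lemma eigenvalue_pos:
  assumes "integral {0..b} (\<lambda>x. (u x)\<^sup>2) \<noteq> 0"
  shows "0 < lam"
proof (rule ccontr)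
  assume "\<not> 0 < lam"
  then have p_nonneg: "0 \<le> c / x\<^sup>2 - lam" for x
    using divide_nonneg_nonneg[OF c_nonneg zero_le_power2[of x]] by linarith
  have "((\<lambda>x. u x * v x) \<longlongrightarrow> 0 * d) (at_left b)"
    by (intro tendsto_mult u_tendsto_at_b v_tendsto_at_b)
  then have "u x = 0" if "0 < x" "x < b" for x
    using vanishes_if_potential_nonneg[OF u_0 p_nonneg] that by simp
  then have "(u x)\<^sup>2 = 0" if "x \<in> {0..b}" for x
    using that u_0 u_b by (cases "x = 0 \<or> x = b") auto
  then have "((\<lambda>x. (u x)\<^sup>2) has_integral 0) {0..b}"
    using has_integral_eq[OF _ has_integral_0] by metis
  with assms show False by (simp add: integral_unique)
qed

lemma rellich_identity: "b * d\<^sup>2 = 2 * lam * integral {0..b} (\<lambda>x. (u x)\<^sup>2)"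
proof -
  have "continuous_on {0..b} (\<lambda>x. 2 * lam * (u x)\<^sup>2)"
    by (intro continuous_intros u_cont)
  then obtain C where lim_0: "(rellich_form \<longlongrightarrow> C) (at_right 0)"
    and lim_b: "(rellich_form \<longlongrightarrow> C + integral {0..b} (\<lambda>x. 2 * lam * (u x)\<^sup>2)) (at_left b)"
    using antiderivative_tendsto_at_ends[OF b_pos _ rellich_form_deriv] by blast
  from lim_0 have "C = 0" by (rule rellich_form_limit_at_0)
  with tendsto_unique[OF trivial_limit_at_left_real lim_b rellich_form_tendsto_at_b]
  show ?thesis by simp
qed

end

theorem mainTheorem4:
  fixes c b lam d :: real and u :: "real \<Rightarrow> real"
  assumes c: "c \<ge> 0" and b: "b > 0"
    and diff: "\<forall>x\<in>{0<..<b}. u differentiable (at x) \<and> deriv u differentiable (at x)"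
    and ode: "\<forall>x\<in>{0<..<b}. - deriv (deriv u) x + (c / x\<^sup>2) * u x = lam * u x"
    and cont: "continuous_on {0..b} u"
    and bc0: "u 0 = 0" and bcb: "u b = 0"
    and int: "((\<lambda>x. (u x)\<^sup>2) has_integral 1) {0..b}"
    and db: "(u has_real_derivative d) (at_left b)"
  shows "d\<^sup>2 / lam = 2 / b"
proof -
  interpret inverse_square_dirichlet c lam u "deriv u" b d
  proof
    fix x assume x: "0 < x" "x < b"
    then show "(u has_real_derivative deriv u x) (at x)"
      using diff by (auto simp: DERIV_deriv_iff_real_differentiable)
    have "(deriv u has_real_derivative deriv (deriv u) x) (at x)"
      using diff x by (auto simp: DERIV_deriv_iff_real_differentiable)
    moreover have "deriv (deriv u) x = (c / x\<^sup>2 - lam) * u x"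
      using ode x by (auto simp: algebra_simps)
    ultimately show "(deriv u has_real_derivative (c / x\<^sup>2 - lam) * u x) (at x)" by simp
  qed (use assms in auto)
  have "integral {0..b} (\<lambda>x. (u x)\<^sup>2) = 1" using int by (rule integral_unique)
  then have "b * d\<^sup>2 = 2 * lam" and "0 < lam"
    using rellich_identity eigenvalue_pos by simp_all
  with b show ?thesis by (simp add: field_simps)
qed

end
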